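(* Let $\lambda=(\lambda_k)_{k\in\mathbb N}\in\ell^\infty(\mathbb N)$ and define $T_\lambda:\ell^\infty(\mathbb N)\to\ell^\infty(\mathbb N)$ by $T_\lambda(x_1,x_2,\ldots)=(\lambda_1x_1,\lambda_2x_2,\ldots)$. The following are equivalent: (i) $T_\lambda$ is recurrent; (ii) $T_\lambda$ is rigid; (iii) $T_\lambda$ is uniformly rigid; (iv) there is a sequence $(\theta_k)_{k\in\mathbb N}\subset\mathbb R$ with $\lambda_k=e^{2\pi i\theta_k}$ for every $k$, and $\liminf_{n\to\infty}\sup_{k\in\mathbb N}|e^{2\pi i n\theta_k}-1|=0$.
   Context: An operator $T$ on a Banach space $X$ is recurrent if for every non-empty open $U\subset X$ there is a positive integer $k$ with $U\cap T^{-k}(U)\neq\emptyset$; rigid if there is an increasing sequence of positive integers $(k_n)$ with $T^{k_n}x\to x$ for all $x\in X$; uniformly rigid if there is an increasing sequence of positive integers $(k_n)$ with $\|T^{k_n}-I\|\to0$. *)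

theory Defs
  imports "HOL-Analysis.Analysis"
begin

text \<open>The Banach space of bounded complex sequences, with the sup norm,
  is realised as the type of bounded continuous functions nat to complex
  (nat carries the discrete topology, so continuity is automatic).\<close>
type_synonym linf = "nat \<Rightarrow>\<^sub>C complex"

definition diag_op :: "linf \<Rightarrow> linf \<Rightarrow> linf" where
  "diag_op l x = Bcontfun (\<lambda>k. apply_bcontfun l k * apply_bcontfun x k)"

definition recurrent :: "('a::topological_space \<Rightarrow> 'a) \<Rightarrow> bool" where
  "recurrent T \<longleftrightarrow> (\<forall>U. open U \<and> U \<noteq> {} \<longrightarrow>
      (\<exists>k::nat. k > 0 \<and> U \<inter> (T ^^ k) -` U \<noteq> {}))"

definition rigid :: "('a::topological_space \<Rightarrow> 'a) \<Rightarrow> bool" where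
  "rigid T \<longleftrightarrow> (\<exists>kn::nat \<Rightarrow> nat. strict_mono kn \<and> (\<forall>n. kn n > 0) \<and>
      (\<forall>x. (\<lambda>n. (T ^^ kn n) x) \<longlonglongrightarrow> x))"

definition uniformly_rigid :: "('a::real_normed_vector \<Rightarrow> 'a) \<Rightarrow> bool" where
  "uniformly_rigid T \<longleftrightarrow> (\<exists>kn::nat \<Rightarrow> nat. strict_mono kn \<and> (\<forall>n. kn n > 0) \<and>
      (\<lambda>n. onorm (\<lambda>x. (T ^^ kn n) x - x)) \<longlonglongrightarrow> 0)"

end

(*
  T^n - I acts diagonally with entries lambda_k^n - 1, so its operator norm is
  d(n) = sup_k |lambda_k^n - 1|, and uniform rigidity says that d has liminf 0.
  Uniform rigidity implies rigidity, and rigidity implies recurrence, for any operator.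
  Conversely, recurrence applied to a small ball around the constant sequence 1 gives,
  for every eps > 0, a time k > 0 with d(k) < eps. This forces |lambda_k| = 1, and then
  |z^(km) - 1| <= m |z^k - 1| for |z| <= 1 turns one small time into arbitrarily large
  ones, so liminf d = 0. Writing lambda_k = exp(2 pi i theta_k) identifies d(n) with
  the supremum in (iv).
*)

theory Submission
  imports Defs
begin

lemma rigid_imp_recurrent:
  fixes T :: "'a::topological_space \<Rightarrow> 'a"
  assumes "rigid T"
  shows "recurrent T"
  unfolding recurrent_def
proof (intro allI impI)
  fix U :: "'a set" assume U: "open U \<and> U \<noteq> {}"
  obtain kn where kn_pos: "\<forall>n. kn n > 0" and kn_lim: "\<forall>x. (\<lambda>n. (T ^^ kn n) x) \<longlonglongrightarrow> x"
    using assms unfolding rigid_def by blast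
  from U obtain x where "x \<in> U" by blast
  then have "\<forall>\<^sub>F n in sequentially. (T ^^ kn n) x \<in> U"
    using U topological_tendstoD[OF kn_lim[rule_format, of x]] by blast
  then obtain n where "(T ^^ kn n) x \<in> U"
    by (meson eventually_sequentially order.refl)
  with \<open>x \<in> U\<close> kn_pos show "\<exists>k>0. U \<inter> (T ^^ k) -` U \<noteq> {}"
    by blast
qed

lemma bounded_linear_funpow:
  fixes T :: "'a::real_normed_vector \<Rightarrow> 'a"
  shows "bounded_linear T \<Longrightarrow> bounded_linear (T ^^ n)"
  by (induction n) (auto simp: id_def o_def intro: bounded_linear_compose)

lemma uniformly_rigid_imp_rigid:
  fixes T :: "'a::real_normed_vector \<Rightarrow> 'a"
  assumes "bounded_linear T" and "uniformly_rigid T"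
  shows "rigid T"
proof -
  obtain kn where kn: "strict_mono kn" "\<forall>n. kn n > 0"
    and onorm_lim: "(\<lambda>n. onorm (\<lambda>x. (T ^^ kn n) x - x)) \<longlonglongrightarrow> 0"
    using \<open>uniformly_rigid T\<close> unfolding uniformly_rigid_def by blast
  have "(\<lambda>n. (T ^^ kn n) x) \<longlonglongrightarrow> x" for x
  proof -
    have "bounded_linear (\<lambda>x. (T ^^ kn n) x - x)" for n
      using bounded_linear_funpow[OF assms(1)] by (rule bounded_linear_sub) simp
    then have "norm ((T ^^ kn n) x - x) \<le> onorm (\<lambda>x. (T ^^ kn n) x - x) * norm x" for n
      using onorm by fastforce
    then have "\<forall>\<^sub>F n in sequentially.
        norm ((T ^^ kn n) x - x) \<le> onorm (\<lambda>x. (T ^^ kn n) x - x) * norm x"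
      by simp
    moreover have "(\<lambda>n. onorm (\<lambda>x. (T ^^ kn n) x - x) * norm x) \<longlonglongrightarrow> 0"
      by (rule tendsto_mult_left_zero[OF onorm_lim])
    ultimately have "(\<lambda>n. (T ^^ kn n) x - x) \<longlonglongrightarrow> 0"
      by (rule Lim_null_comparison)
    then show ?thesis
      by (rule LIM_zero_cancel)
  qed
  with kn show ?thesis
    unfolding rigid_def by blast
qed

lemma norm_minus_one_le_perturbed:
  fixes a y :: "'a::real_normed_algebra_1"
  assumes "norm (1 - y) \<le> 1/2"
  shows "norm (a - 1) \<le> 2 * (norm (a * y - 1) + norm (1 - y))"
proof -
  have "norm (a - 1) \<le> norm (a * y - 1) + norm a * norm (1 - y)"
    using norm_triangle_ineq[of "a * y - 1" "a * (1 - y)"] norm_mult_ineq[of a "1 - y"]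
    by (simp add: algebra_simps)
  moreover have "norm a * norm (1 - y) \<le> (1 + norm (a - 1)) * norm (1 - y)"
    using norm_triangle_ineq[of 1 "a - 1"] by (intro mult_right_mono) simp_all
  moreover have "norm (a - 1) * norm (1 - y) \<le> norm (a - 1) / 2"
    using assms mult_left_mono[of "norm (1 - y)" "1/2" "norm (a - 1)"] by simp
  ultimately show ?thesis
    by (simp add: algebra_simps)
qed

lemma abs_minus_one_le_abs_power_minus_one:
  fixes r :: real
  assumes "0 \<le> r" and "0 < k"
  shows "\<bar>r - 1\<bar> \<le> \<bar>r ^ k - 1\<bar>"
proof (cases "r \<le> 1")
  case True
  then have "r ^ k \<le> r" and "r ^ k \<le> 1"
    using assms power_decreasing[of 1 k r] by (simp_all add: power_le_one)
  with True show ?thesis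
    by simp
next
  case False
  then have "r \<le> r ^ k"
    using assms power_increasing[of 1 k r] by simp
  with False show ?thesis
    by simp
qed

lemma liminf_eq_0_if_frequently_less:
  fixes f :: "nat \<Rightarrow> real"
  assumes nonneg: "\<And>n. 0 \<le> f n"
    and freq: "\<And>\<epsilon>. \<epsilon> > 0 \<Longrightarrow> \<exists>\<^sub>F n in sequentially. f n < \<epsilon>"
  shows "liminf (\<lambda>n. ereal (f n)) = 0"
proof (rule antisym)
  show "liminf (\<lambda>n. ereal (f n)) \<le> 0"
  proof (rule ereal_le_epsilon2)
    fix \<epsilon> :: real
    assume "\<epsilon> > 0"
    show "liminf (\<lambda>n. ereal (f n)) \<le> 0 + ereal \<epsilon>"
    proof (rule ccontr)
      assume "\<not> liminf (\<lambda>n. ereal (f n)) \<le> 0 + ereal \<epsilon>"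
      then have "\<forall>\<^sub>F n in sequentially. ereal \<epsilon> < ereal (f n)"
        by (intro less_LiminfD) simp
      then have "\<forall>\<^sub>F n in sequentially. \<not> f n < \<epsilon>"
        by eventually_elim simp
      with freq[OF \<open>\<epsilon> > 0\<close>] show False
        by (simp add: frequently_def)
    qed
  qed
  show "0 \<le> liminf (\<lambda>n. ereal (f n))"
    by (rule Liminf_bounded) (simp add: nonneg)
qed

lemma liminf_eq_0_imp_subseq_tendsto_0:
  fixes f :: "nat \<Rightarrow> real"
  assumes "liminf (\<lambda>n. ereal (f n)) = 0"
  shows "\<exists>kn. strict_mono kn \<and> (\<forall>n. kn n > 0) \<and> (\<lambda>n. f (kn n)) \<longlonglongrightarrow> 0"
proof -
  obtain r where "strict_mono r" and "((\<lambda>n. ereal (f n)) \<circ> r) \<longlonglongrightarrow> liminf (\<lambda>n. ereal (f n))"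
    using liminf_subseq_lim by blast
  then have "(\<lambda>n. f (r n)) \<longlonglongrightarrow> 0"
    using assms by (simp add: o_def zero_ereal_def)
  then have "(\<lambda>n. f (r (Suc n))) \<longlonglongrightarrow> 0"
    by (rule LIMSEQ_Suc)
  moreover have "strict_mono (\<lambda>n. r (Suc n))"
    using \<open>strict_mono r\<close> by (simp add: strict_mono_Suc_iff)
  moreover have "r (Suc n) > 0" for n
    using seq_suble[OF \<open>strict_mono r\<close>, of "Suc n"] by simp
  ultimately show ?thesis
    by blast
qed

lemma exp_2pi_i_of_nat_mult:
  "exp (2 * pi * \<i> * of_nat n * complex_of_real t) = exp (2 * pi * \<i> * complex_of_real t) ^ n"
proof -
  have "exp (2 * pi * \<i> * of_nat n * complex_of_real t) = exp (of_nat n * (2 * pi * \<i> * complex_of_real t))"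
    by (simp add: algebra_simps)
  also have "\<dots> = exp (2 * pi * \<i> * complex_of_real t) ^ n"
    by (rule exp_of_nat_mult)
  finally show ?thesis .
qed

lemma unimodular_eq_exp_2pi_i:
  assumes "cmod z = 1"
  shows "z = exp (2 * pi * \<i> * complex_of_real (Arg z / (2 * pi)))"
proof -
  have "2 * pi * \<i> * complex_of_real (Arg z / (2 * pi)) = \<i> * complex_of_real (Arg z)"
    by (simp add: field_simps)
  moreover have "z \<noteq> 0"
    using assms by auto
  ultimately show ?thesis
    using Arg_eq[of z] assms by simp
qed

definition diag_dev :: "linf \<Rightarrow> nat \<Rightarrow> real" where
  "diag_dev l n = (SUP k. cmod (l k ^ n - 1))"

context
  fixes l :: linf
begin

lemma diag_op_apply: "diag_op l x k = l k * x k"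
proof -
  have "(\<lambda>k. l k * x k) \<in> bcontfun"
  proof (rule bcontfun_normI)
    show "norm (l k * x k) \<le> norm l * norm x" for k
      unfolding norm_mult by (intro mult_mono norm_bounded) auto
  qed simp
  then show ?thesis
    unfolding diag_op_def by (simp add: Bcontfun_inverse)
qed

lemma diag_op_funpow_apply: "(diag_op l ^^ n) x k = l k ^ n * x k"
  by (induction n) (auto simp: diag_op_apply)

lemma bounded_linear_diag_op: "bounded_linear (diag_op l)"
proof (rule bounded_linear_intro[where K = "norm l"])
  show "diag_op l (x + y) = diag_op l x + diag_op l y" for x y
    by (rule bcontfun_eqI) (simp add: diag_op_apply algebra_simps)
  show "diag_op l (r *\<^sub>R x) = r *\<^sub>R diag_op l x" for r x
    by (rule bcontfun_eqI) (simp add: diag_op_apply scaleR_conv_of_real)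
  show "norm (diag_op l x) \<le> norm x * norm l" for x
  proof (rule norm_bound)
    show "norm (diag_op l x k) \<le> norm x * norm l" for k
      unfolding diag_op_apply norm_mult by (subst mult.commute) (intro mult_mono norm_bounded; simp)
  qed
qed

lemma bdd_above_diag_dev: "bdd_above (range (\<lambda>k. cmod (l k ^ n - 1)))"
proof (rule bdd_aboveI2)
  fix k
  have "cmod (l k ^ n - 1) \<le> cmod (l k ^ n) + 1"
    by (metis norm_one norm_triangle_ineq4)
  also have "\<dots> \<le> norm l ^ n + 1"
    by (simp add: norm_power power_mono norm_bounded)
  finally show "cmod (l k ^ n - 1) \<le> norm l ^ n + 1" .
qed

lemma diag_dev_upper: "cmod (l k ^ n - 1) \<le> diag_dev l n"
  unfolding diag_dev_def by (rule cSUP_upper[OF _ bdd_above_diag_dev]) simp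

lemma diag_dev_least: "(\<And>k. cmod (l k ^ n - 1) \<le> c) \<Longrightarrow> diag_dev l n \<le> c"
  unfolding diag_dev_def by (rule cSUP_least) auto

lemma diag_dev_nonneg: "0 \<le> diag_dev l n"
  using diag_dev_upper[of 0 n] norm_ge_zero order_trans by blast

lemma onorm_diag_op_funpow_minus_id: "onorm (\<lambda>x. (diag_op l ^^ n) x - x) = diag_dev l n"
proof (rule antisym)
  have "norm ((diag_op l ^^ n) x - x) \<le> diag_dev l n * norm x" for x
  proof (rule norm_bound)
    fix k
    have "norm (((diag_op l ^^ n) x - x) k) = cmod (l k ^ n - 1) * cmod (x k)"
      by (simp add: diag_op_funpow_apply algebra_simps flip: norm_mult)
    also have "\<dots> \<le> diag_dev l n * norm x"
      by (intro mult_mono diag_dev_upper norm_bounded diag_dev_nonneg) auto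
    finally show "norm (((diag_op l ^^ n) x - x) k) \<le> diag_dev l n * norm x" .
  qed
  then show "onorm (\<lambda>x. (diag_op l ^^ n) x - x) \<le> diag_dev l n"
    by (rule onorm_bound[OF diag_dev_nonneg])
next
  let ?one = "const_bcontfun 1 :: linf"
  have norm_one: "norm ?one = 1"
    using norm_bounded[of ?one 0] by (intro antisym norm_bound) auto
  show "diag_dev l n \<le> onorm (\<lambda>x. (diag_op l ^^ n) x - x)"
  proof (rule diag_dev_least)
    fix k
    have "cmod (l k ^ n - 1) = norm (((diag_op l ^^ n) ?one - ?one) k)"
      by (simp add: diag_op_funpow_apply)
    also have "\<dots> \<le> norm ((diag_op l ^^ n) ?one - ?one)"
      by (rule norm_bounded)
    also have "\<dots> \<le> onorm (\<lambda>x. (diag_op l ^^ n) x - x)"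
      using onorm[of "\<lambda>x. (diag_op l ^^ n) x - x" ?one] norm_one
      by (simp add: bounded_linear_sub bounded_linear_funpow bounded_linear_diag_op bounded_linear_ident)
    finally show "cmod (l k ^ n - 1) \<le> onorm (\<lambda>x. (diag_op l ^^ n) x - x)" .
  qed
qed

lemma uniformly_rigid_diag_op_iff:
  "uniformly_rigid (diag_op l) \<longleftrightarrow>
    (\<exists>kn. strict_mono kn \<and> (\<forall>n. kn n > 0) \<and> (\<lambda>n. diag_dev l (kn n)) \<longlonglongrightarrow> 0)"
  unfolding uniformly_rigid_def onorm_diag_op_funpow_minus_id ..

lemma recurrent_diag_op_imp_small_dev:
  assumes "recurrent (diag_op l)" and "\<epsilon> > 0"
  shows "\<exists>k>0. diag_dev l k < \<epsilon>"
proof -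
  define \<delta> where "\<delta> = min (1/2) (\<epsilon>/8)"
  let ?one = "const_bcontfun 1 :: linf"
  have "\<delta> > 0"
    using \<open>\<epsilon> > 0\<close> by (simp add: \<delta>_def)
  then obtain k y where "k > 0" and y: "y \<in> ball ?one \<delta>" and Ty: "(diag_op l ^^ k) y \<in> ball ?one \<delta>"
    using assms(1) unfolding recurrent_def by (metis Int_emptyI open_ball centre_in_ball empty_iff vimageE)
  have "cmod (l j ^ k - 1) \<le> \<epsilon>/2" for j
  proof -
    have "cmod (1 - y j) < \<delta>"
      using dist_fun_lt_imp_dist_val_lt[of ?one y \<delta> j] y by (simp add: dist_norm)
    moreover have "cmod (1 - l j ^ k * y j) < \<delta>"
      using dist_fun_lt_imp_dist_val_lt[of ?one "(diag_op l ^^ k) y" \<delta> j] Ty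
      by (simp add: dist_norm diag_op_funpow_apply)
    ultimately show ?thesis
      using norm_minus_one_le_perturbed[of "y j" "l j ^ k"] unfolding \<delta>_def
      by (simp add: norm_minus_commute[of 1])
  qed
  then have "diag_dev l k \<le> \<epsilon>/2"
    by (rule diag_dev_least)
  with \<open>k > 0\<close> \<open>\<epsilon> > 0\<close> show ?thesis
    by (intro exI[of _ k]) auto
qed

lemma unimodular_if_small_dev:
  assumes "\<And>\<epsilon>. \<epsilon> > 0 \<Longrightarrow> \<exists>k>0. diag_dev l k < \<epsilon>"
  shows "cmod (l j) = 1"
proof (rule ccontr)
  assume "cmod (l j) \<noteq> 1"
  then obtain k where "k > 0" and small: "diag_dev l k < \<bar>cmod (l j) - 1\<bar>"
    using assms[of "\<bar>cmod (l j) - 1\<bar>"] by auto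
  have "\<bar>cmod (l j) - 1\<bar> \<le> \<bar>cmod (l j) ^ k - 1\<bar>"
    using \<open>k > 0\<close> by (intro abs_minus_one_le_abs_power_minus_one) simp_all
  also have "\<dots> \<le> cmod (l j ^ k - 1)"
    by (metis norm_one norm_power norm_triangle_ineq3)
  also have "\<dots> \<le> diag_dev l k"
    by (rule diag_dev_upper)
  finally show False
    using small by simp
qed

lemma diag_dev_mult_le:
  assumes "\<And>j. cmod (l j) \<le> 1"
  shows "diag_dev l (k * m) \<le> real m * diag_dev l k"
proof (rule diag_dev_least)
  fix j
  have "cmod (l j ^ (k * m) - 1) = cmod ((l j ^ k) ^ m - 1 ^ m)"
    by (simp add: power_mult)
  also have "\<dots> \<le> real m * cmod (l j ^ k - 1)"
    using assms[of j] by (intro norm_power_diff) (simp_all add: norm_power power_le_one)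
  also have "\<dots> \<le> real m * diag_dev l k"
    by (intro mult_left_mono diag_dev_upper) simp
  finally show "cmod (l j ^ (k * m) - 1) \<le> real m * diag_dev l k" .
qed

lemma frequently_small_dev_if_small_dev:
  assumes small: "\<And>\<epsilon>. \<epsilon> > 0 \<Longrightarrow> \<exists>k>0. diag_dev l k < \<epsilon>" and "\<epsilon> > 0"
  shows "\<exists>\<^sub>F n in sequentially. diag_dev l n < \<epsilon>"
  unfolding frequently_sequentially
proof
  fix N
  obtain k where "k > 0" and k: "diag_dev l k < \<epsilon> / Suc N"
    using small[of "\<epsilon> / Suc N"] \<open>\<epsilon> > 0\<close> by auto
  have "diag_dev l (k * Suc N) \<le> real (Suc N) * diag_dev l k"
    using unimodular_if_small_dev[OF small] by (intro diag_dev_mult_le) simp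
  also have "\<dots> < \<epsilon>"
    using k by (simp add: field_simps)
  finally have "diag_dev l (k * Suc N) < \<epsilon>" .
  moreover have "N \<le> k * Suc N"
    using \<open>k > 0\<close> mult_le_mono1[of 1 k "Suc N"] by simp
  ultimately show "\<exists>n\<ge>N. diag_dev l n < \<epsilon>"
    by blast
qed

lemma diag_dev_exp_form:
  assumes "\<forall>k. apply_bcontfun l k = exp (2 * pi * \<i> * complex_of_real (\<theta> k))"
  shows "diag_dev l n = (SUP k. cmod (exp (2 * pi * \<i> * of_nat n * complex_of_real (\<theta> k)) - 1))"
  unfolding diag_dev_def exp_2pi_i_of_nat_mult using assms by simp

lemma exp_form_iff_unimodular:
  "(\<exists>\<theta>::nat \<Rightarrow> real.
      (\<forall>k. apply_bcontfun l k = exp (2 * pi * \<i> * complex_of_real (\<theta> k)))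
    \<and> liminf (\<lambda>n::nat. ereal (SUP k::nat.
         cmod (exp (2 * pi * \<i> * of_nat n * complex_of_real (\<theta> k)) - 1))) = 0)
   \<longleftrightarrow> (\<forall>k. cmod (apply_bcontfun l k) = 1) \<and> liminf (\<lambda>n. ereal (diag_dev l n)) = 0"
  (is "Ex ?exp_form \<longleftrightarrow> ?unimodular")
proof
  assume "Ex ?exp_form"
  then obtain \<theta> where "?exp_form \<theta>" ..
  then show ?unimodular
    using diag_dev_exp_form[of \<theta>] by (simp add: norm_exp_eq_Re)
next
  assume ?unimodular
  define \<theta> where "\<theta> k = Arg (l k) / (2 * pi)" for k
  have \<theta>: "\<forall>k. apply_bcontfun l k = exp (2 * pi * \<i> * complex_of_real (\<theta> k))"
    using \<open>?unimodular\<close> unimodular_eq_exp_2pi_i unfolding \<theta>_def by blast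
  with \<open>?unimodular\<close> have "?exp_form \<theta>"
    unfolding diag_dev_exp_form[OF \<theta>] by blast
  then show "Ex ?exp_form"
    by blast
qed

end

theorem theorem5p3:
  fixes l :: linf
  shows "(recurrent (diag_op l) \<longleftrightarrow> rigid (diag_op l))
    \<and> (rigid (diag_op l) \<longleftrightarrow> uniformly_rigid (diag_op l))
    \<and> (uniformly_rigid (diag_op l) \<longleftrightarrow>
         (\<exists>\<theta>::nat \<Rightarrow> real.
            (\<forall>k. apply_bcontfun l k = exp (2 * pi * \<i> * complex_of_real (\<theta> k)))
          \<and> liminf (\<lambda>n::nat. ereal (SUP k::nat.
               cmod (exp (2 * pi * \<i> * of_nat n * complex_of_real (\<theta> k)) - 1))) = 0))"
proof -
  let ?T = "diag_op l" and ?liminf_dev = "liminf (\<lambda>n. ereal (diag_dev l n))"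
  have rigid_rec: "rigid ?T \<Longrightarrow> recurrent ?T"
    by (rule rigid_imp_recurrent)
  have ur_rigid: "uniformly_rigid ?T \<Longrightarrow> rigid ?T"
    by (rule uniformly_rigid_imp_rigid[OF bounded_linear_diag_op])
  have liminf_ur: "?liminf_dev = 0 \<Longrightarrow> uniformly_rigid ?T"
    unfolding uniformly_rigid_diag_op_iff by (rule liminf_eq_0_imp_subseq_tendsto_0)
  have rec_unimodular: "\<forall>k. cmod (l k) = 1" if "recurrent ?T"
    using unimodular_if_small_dev[OF recurrent_diag_op_imp_small_dev[OF that]] by blast
  have rec_liminf: "?liminf_dev = 0" if "recurrent ?T"
    using frequently_small_dev_if_small_dev[OF recurrent_diag_op_imp_small_dev[OF that]]
    by (rule liminf_eq_0_if_frequently_less[OF diag_dev_nonneg])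
  show ?thesis
    unfolding exp_form_iff_unimodular
    using rigid_rec ur_rigid liminf_ur rec_unimodular rec_liminf by blast
qed

end
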